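(* Let $U\subset\mathbb{R}^u\times\mathbb{R}^s$ be a convex neighborhood of zero and let $f:U\to\mathbb{R}^u\times\mathbb{R}^s$ be a $C^1$ map with $f(0)=0$. Suppose that for $M>0$, $m\left[\frac{\partial f_{\mathrm x}}{\partial\mathrm x}(U)\right]-M\sup_{z\in U}\left\|\frac{\partial f_{\mathrm x}}{\partial\mathrm y}(z)\right\|\ge\xi$, $\sup_{z\in U}\left\{\left\|\frac{\partial f_{\mathrm y}}{\partial\mathrm y}(z)\right\|+\frac1M\left\|\frac{\partial f_{\mathrm y}}{\partial\mathrm x}(z)\right\|\right\}\le\mu$, and $\xi/\mu>1$. Then $f(J_u(0,M)\cap U)\subset\mathrm{int}\,J_u(0,M)\cup\{0\}$, where $J_u(0,M)=\{(\mathrm x,\mathrm y)\in\mathbb{R}^u\times\mathbb{R}^s:\|\mathrm y\|\le M\|\mathrm x\|\}$.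
   Context: Points of $\mathbb{R}^u\times\mathbb{R}^s$ are written $(\mathrm x,\mathrm y)$, $f=(f_{\mathrm x},f_{\mathrm y})$, norms Euclidean. For a linear map $A$, $m(A)=\max\{c:\|Av\|\ge c\|v\|\ \forall v\}$; for a set $\mathbf A$ of matrices, $m(\mathbf A)=\inf_{A\in\mathbf A}m(A)$. $[\partial f_{\mathrm x}/\partial\mathrm x(U)]$ is the interval enclosure: the set of matrices whose $(i,j)$ entry lies in $[\inf_{U}\partial f_{\mathrm x,i}/\partial\mathrm x_j,\sup_U\partial f_{\mathrm x,i}/\partial\mathrm x_j]$. *)

theory Defs
  imports "HOL-Analysis.Analysis"
begin

definition min_norm :: "real^'n^'m \<Rightarrow> real" where
  "min_norm A = Sup {c. \<forall>v. norm (A *v v) \<ge> c * norm v}"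

definition min_norm_set :: "(real^'n^'m) set \<Rightarrow> real" where
  "min_norm_set S = Inf (min_norm ` S)"

definition interval_enclosure :: "('a \<Rightarrow> real^'n^'m) \<Rightarrow> 'a set \<Rightarrow> (real^'n^'m) set" where
  "interval_enclosure D U =
     {A. \<forall>i j. (INF z\<in>U. ereal (D z $ i $ j)) \<le> ereal (A $ i $ j)
              \<and> ereal (A $ i $ j) \<le> (SUP z\<in>U. ereal (D z $ i $ j))}"

definition dxx :: "((real^'u) \<times> (real^'s) \<Rightarrow> (real^'u) \<times> (real^'s)) \<Rightarrow> real^'u \<Rightarrow> real^'u" where
  "dxx Df = (\<lambda>v. fst (Df (v, 0)))"
definition dxy :: "((real^'u) \<times> (real^'s) \<Rightarrow> (real^'u) \<times> (real^'s)) \<Rightarrow> real^'s \<Rightarrow> real^'u" where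
  "dxy Df = (\<lambda>w. fst (Df (0, w)))"
definition dyx :: "((real^'u) \<times> (real^'s) \<Rightarrow> (real^'u) \<times> (real^'s)) \<Rightarrow> real^'u \<Rightarrow> real^'s" where
  "dyx Df = (\<lambda>v. snd (Df (v, 0)))"
definition dyy :: "((real^'u) \<times> (real^'s) \<Rightarrow> (real^'u) \<times> (real^'s)) \<Rightarrow> real^'s \<Rightarrow> real^'s" where
  "dyy Df = (\<lambda>w. snd (Df (0, w)))"

definition cone_u :: "real \<Rightarrow> ((real^'u) \<times> (real^'s)) set" where
  "cone_u M = {(x, y). norm y \<le> M * norm x}"

end

theory Submission
  imports Defs
begin

(* Along the segment from 0 to z = (x, y) we have f z = \<integral>[0,1] Df(t z) z dt. The x-block
   \<integral>[0,1] \<partial>f_x/\<partial>x(t z) dt of the averaged derivative is itself a matrix of the interval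
   enclosure, so |f_x z| \<ge> m |x| - sup \<parallel>\<partial>f_x/\<partial>y\<parallel> |y| \<ge> \<xi> |x| for z in the cone, whereas
   |f_y z| \<le> sup (\<parallel>\<partial>f_y/\<partial>x\<parallel> + M \<parallel>\<partial>f_y/\<partial>y\<parallel>) |x| \<le> \<mu> M |x|. As \<mu> < \<xi>, the image point satisfies
   the open condition |f_y z| < M |f_x z| unless x = 0, which forces z = 0. *)

lemma min_norm_mult_norm_le:
  fixes A :: "real^'n^'m"
  shows "min_norm A * norm v \<le> norm (A *v v)"
proof (cases "v = 0")
  case True then show ?thesis by simp
next
  case False
  let ?C = "{c. \<forall>v. c * norm v \<le> norm (A *v v)}"
  have "0 \<in> ?C" by simp
  moreover have "\<And>c. c \<in> ?C \<Longrightarrow> c \<le> norm (A *v v) / norm v"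
    using False by (auto simp: field_simps)
  ultimately have "Sup ?C \<le> norm (A *v v) / norm v"
    by (metis (no_types, lifting) cSup_least empty_iff)
  then show ?thesis using False unfolding min_norm_def by (simp add: field_simps)
qed

lemma min_norm_nonneg:
  fixes A :: "real^'n^'m"
  shows "0 \<le> min_norm A"
proof -
  let ?C = "{c. \<forall>v. c * norm v \<le> norm (A *v v)}"
  fix k :: 'n
  have "c \<le> norm (A *v axis k 1)" if "c \<in> ?C" for c
    using that by (metis (mono_tags, lifting) mem_Collect_eq mult.right_neutral norm_axis_1)
  then have "bdd_above ?C" by (auto simp: bdd_above_def)
  moreover have "0 \<in> ?C" by simp
  ultimately show ?thesis unfolding min_norm_def by (rule cSup_upper[rotated])
qed

lemma min_norm_set_le:
  fixes S :: "(real^'n^'m) set"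
  assumes "A \<in> S"
  shows "min_norm_set S \<le> min_norm A"
  unfolding min_norm_set_def
  by (rule cInf_lower) (use assms min_norm_nonneg in \<open>auto simp: bdd_below_def\<close>)

lemma integral_unit_interval_between:
  fixes g :: "real \<Rightarrow> real"
  assumes cont: "continuous_on {0..1} g"
    and bounds: "\<And>t. t \<in> {0..1} \<Longrightarrow> lo \<le> ereal (g t) \<and> ereal (g t) \<le> hi"
  shows "lo \<le> ereal (integral {0..1} g) \<and> ereal (integral {0..1} g) \<le> hi"
proof -
  obtain t0 where t0: "t0 \<in> {0..1}" "\<And>t. t \<in> {0..1} \<Longrightarrow> g t0 \<le> g t"
    using continuous_attains_inf[OF _ _ cont] by auto
  obtain t1 where t1: "t1 \<in> {0..1}" "\<And>t. t \<in> {0..1} \<Longrightarrow> g t \<le> g t1"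
    using continuous_attains_sup[OF _ _ cont] by auto
  have ig: "g integrable_on {0..1}"
    using cont integrable_continuous_interval by blast
  have "g t0 \<le> integral {0..1} g"
    using integral_le[OF integrable_const_ivl ig, of "g t0"] t0 by auto
  moreover have "integral {0..1} g \<le> g t1"
    using integral_le[OF ig integrable_const_ivl, of "g t1"] t1 by auto
  ultimately show ?thesis
    using bounds[OF t0(1)] bounds[OF t1(1)] by (meson ereal_less_eq(3) order_trans)
qed

lemma integral_mem_interval_enclosure:
  fixes A :: "real \<Rightarrow> real^'n^'m"
  assumes cont: "continuous_on {0..1} A" and range: "\<And>t. t \<in> {0..1} \<Longrightarrow> A t \<in> D ` U"
  shows "integral {0..1} A \<in> interval_enclosure D U"
  unfolding interval_enclosure_def
proof (intro CollectI allI)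
  fix i j
  have cont_entry: "continuous_on {0..1} (\<lambda>t. A t $ i $ j)"
    using cont by (intro continuous_intros)
  have "integral {0..1} A $ i $ j = integral {0..1} (\<lambda>t. A t $ i) $ j"
    using integral_linear[OF integrable_continuous_interval[OF cont] bounded_linear_vec_nth, of i]
    by (simp add: o_def)
  also have "\<dots> = integral {0..1} (\<lambda>t. A t $ i $ j)"
    using cont by (simp add: integrable_continuous_interval continuous_intros)
  finally have entry_eq: "integral {0..1} A $ i $ j = integral {0..1} (\<lambda>t. A t $ i $ j)" .
  have "(INF z\<in>U. ereal (D z $ i $ j)) \<le> ereal (A t $ i $ j)
      \<and> ereal (A t $ i $ j) \<le> (SUP z\<in>U. ereal (D z $ i $ j))" if "t \<in> {0..1}" for t
    using range[OF that] by (auto intro: INF_lower SUP_upper)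
  then show "(INF z\<in>U. ereal (D z $ i $ j)) \<le> ereal (integral {0..1} A $ i $ j)
      \<and> ereal (integral {0..1} A $ i $ j) \<le> (SUP z\<in>U. ereal (D z $ i $ j))"
    unfolding entry_eq by (rule integral_unit_interval_between[OF cont_entry])
qed

lemma bounded_linear_matrix_vector_mult_left:
  "bounded_linear (\<lambda>A::real^'n^'m. A *v x)"
  unfolding linear_conv_bounded_linear[symmetric]
  by (auto intro!: linearI simp: matrix_vector_mult_def vec_eq_iff sum.distrib sum_distrib_left algebra_simps)

lemma integral_matrix_vector_mult:
  fixes A :: "real \<Rightarrow> real^'n^'m"
  assumes "A integrable_on S"
  shows "integral S (\<lambda>t. A t *v x) = integral S A *v x"
  using integral_linear[OF assms bounded_linear_matrix_vector_mult_left] by (simp add: o_def)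

lemma bounded_linear_dxx: "bounded_linear (dxx (blinfun_apply L))"
  unfolding dxx_def by (intro bounded_linear_intros)

lemma bounded_linear_dxy: "bounded_linear (dxy (blinfun_apply L))"
  unfolding dxy_def by (intro bounded_linear_intros)

lemma bounded_linear_dyx: "bounded_linear (dyx (blinfun_apply L))"
  unfolding dyx_def by (intro bounded_linear_intros)

lemma bounded_linear_dyy: "bounded_linear (dyy (blinfun_apply L))"
  unfolding dyy_def by (intro bounded_linear_intros)

lemma blinfun_apply_pair_eq_partials:
  "blinfun_apply L (x, y) = (dxx (blinfun_apply L) x + dxy (blinfun_apply L) y,
                             dyx (blinfun_apply L) x + dyy (blinfun_apply L) y)"
proof -
  have "blinfun_apply L (x, y) = blinfun_apply L (x, 0) + blinfun_apply L (0, y)"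
    by (metis add.right_neutral add_0 blinfun.add_right add_Pair)
  then show ?thesis by (simp add: dxx_def dxy_def dyx_def dyy_def prod_eq_iff)
qed

lemma dxx_eq_matrix_vector_mult: "dxx (blinfun_apply L) x = matrix (dxx (blinfun_apply L)) *v x"
  by (simp add: matrix_works bounded_linear.linear[OF bounded_linear_dxx])

lemma continuous_on_matrix_dxx:
  "continuous_on S F \<Longrightarrow> continuous_on S (\<lambda>t. matrix (dxx (blinfun_apply (F t))))"
  unfolding matrix_def dxx_def by (intro continuous_intros)

lemma scaleR_mem_convex:
  assumes "convex U" "0 \<in> U" "z \<in> U" "t \<in> {0..1}"
  shows "t *\<^sub>R z \<in> U"
  using convexD[OF assms(1-3), of "1 - t" t] assms(4) by simp

lemma has_integral_derivative_along_ray: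
  fixes f :: "'a::real_normed_vector \<Rightarrow> 'b::banach"
  assumes "convex U" "0 \<in> U" "z \<in> U"
    and deriv: "\<And>w. w \<in> U \<Longrightarrow> (f has_derivative blinfun_apply (f' w)) (at w)"
  shows "((\<lambda>t. blinfun_apply (f' (t *\<^sub>R z)) z) has_integral f z - f 0) {0..1}"
proof -
  note ray = scaleR_mem_convex[OF assms(1-3)]
  have "((\<lambda>t. f (t *\<^sub>R z)) has_vector_derivative blinfun_apply (f' (t *\<^sub>R z)) z) (at t within {0..1})"
    if "t \<in> {0..1}" for t
  proof -
    have "((\<lambda>t. t *\<^sub>R z) has_derivative (\<lambda>h. h *\<^sub>R z)) (at t within {0..1})"
      by (intro derivative_eq_intros) auto
    moreover have "(f has_derivative blinfun_apply (f' (t *\<^sub>R z)))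
        (at (t *\<^sub>R z) within (\<lambda>t. t *\<^sub>R z) ` {0..1})"
      using deriv[OF ray[OF that]] by (rule has_derivative_at_withinI)
    ultimately have "((\<lambda>t. f (t *\<^sub>R z)) has_derivative
        (\<lambda>h. blinfun_apply (f' (t *\<^sub>R z)) (h *\<^sub>R z))) (at t within {0..1})"
      by (rule has_derivative_in_compose)
    then show ?thesis by (simp add: has_vector_derivative_def blinfun.scaleR_right)
  qed
  from fundamental_theorem_of_calculus[of 0 1 "\<lambda>t. f (t *\<^sub>R z)", OF _ this]
  show ?thesis by simp
qed

lemma norm_fst_ge_min_norm_set:
  fixes f :: "(real^'u) \<times> (real^'s) \<Rightarrow> (real^'u) \<times> (real^'s)"
  assumes U: "convex U" "0 \<in> U" "(x, y) \<in> U"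
    and deriv: "\<And>w. w \<in> U \<Longrightarrow> (f has_derivative blinfun_apply (f' w)) (at w)"
    and cont: "continuous_on U f'" and "f 0 = 0"
    and S: "\<And>w. w \<in> U \<Longrightarrow> onorm (dxy (blinfun_apply (f' w))) \<le> S"
  shows "min_norm_set (interval_enclosure (\<lambda>w. matrix (dxx (blinfun_apply (f' w)))) U) * norm x
           - S * norm y \<le> norm (fst (f (x, y)))"
proof -
  define z where "z = (x, y)"
  define D where "D w = matrix (dxx (blinfun_apply (f' w)))" for w
  define A where "A t = D (t *\<^sub>R z)" for t
  define b where "b t = dxy (blinfun_apply (f' (t *\<^sub>R z))) y" for t
  note ray = scaleR_mem_convex[OF U(1,2) U(3)[folded z_def]]
  have cont_ray: "continuous_on {0..1} (\<lambda>t. f' (t *\<^sub>R z))"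
    by (rule continuous_on_compose2[OF cont]) (auto intro!: continuous_intros ray)
  have contA: "continuous_on {0..1} A"
    unfolding A_def D_def by (intro continuous_on_matrix_dxx cont_ray)
  then have intA: "A integrable_on {0..1}"
    by (rule integrable_continuous_interval)
  have intb: "b integrable_on {0..1}"
    unfolding b_def dxy_def by (intro integrable_continuous_interval continuous_intros cont_ray)
  have "((\<lambda>t. A t *v x + b t) has_integral fst (f z)) {0..1}"
    using has_integral_linear[OF has_integral_derivative_along_ray[OF U(1,2) U(3)[folded z_def] deriv]
        bounded_linear_fst] \<open>f 0 = 0\<close>
    by (simp add: o_def A_def D_def b_def z_def blinfun_apply_pair_eq_partials dxx_eq_matrix_vector_mult)
  moreover have "(\<lambda>t. A t *v x) integrable_on {0..1}"
    using integrable_linear[OF intA bounded_linear_matrix_vector_mult_left] by (simp add: o_def)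
  ultimately have "fst (f z) = integral {0..1} (\<lambda>t. A t *v x) + integral {0..1} b"
    using intb by (simp add: integral_unique flip: integral_add)
  then have fst_eq: "fst (f z) = integral {0..1} A *v x + integral {0..1} b"
    by (simp add: integral_matrix_vector_mult[OF intA])
  have "integral {0..1} A \<in> interval_enclosure D U"
    using contA ray unfolding A_def by (intro integral_mem_interval_enclosure) auto
  then have "min_norm_set (interval_enclosure D U) * norm x \<le> norm (integral {0..1} A *v x)"
    by (meson min_norm_set_le min_norm_mult_norm_le mult_right_mono norm_ge_zero order_trans)
  moreover have "norm (integral {0..1} b) \<le> S * norm y"
  proof -
    have "norm (b t) \<le> S * norm y" if "t \<in> {0..1}" for t
      using onorm[OF bounded_linear_dxy, of "f' (t *\<^sub>R z)" y] S[OF ray[OF that]]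
      unfolding b_def by (meson mult_right_mono norm_ge_zero order_trans)
    then show ?thesis
      using integral_norm_bound_integral[OF intb integrable_const_ivl, of "S * norm y"] by simp
  qed
  ultimately show ?thesis
    unfolding z_def[symmetric] fst_eq D_def by (smt (verit) norm_diff_ineq norm_minus_cancel diff_minus_eq_add)
qed

lemma norm_snd_le:
  fixes f :: "(real^'u) \<times> (real^'s) \<Rightarrow> (real^'u) \<times> (real^'s)"
  assumes U: "convex U" "0 \<in> U" "(x, y) \<in> U"
    and deriv: "\<And>w. w \<in> U \<Longrightarrow> (f has_derivative blinfun_apply (f' w)) (at w)"
    and "f 0 = 0"
    and bound: "\<And>w. w \<in> U \<Longrightarrow>
      onorm (dyx (blinfun_apply (f' w))) * norm x + onorm (dyy (blinfun_apply (f' w))) * norm y \<le> c"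
  shows "norm (snd (f (x, y))) \<le> c"
proof -
  define z where "z = (x, y)"
  note ray = scaleR_mem_convex[OF U(1,2) U(3)[folded z_def]]
  have int: "((\<lambda>t. snd (blinfun_apply (f' (t *\<^sub>R z)) z)) has_integral snd (f z)) (cbox 0 1)"
    using has_integral_linear[OF has_integral_derivative_along_ray[OF U(1,2) U(3)[folded z_def] deriv]
        bounded_linear_snd] \<open>f 0 = 0\<close>
    by (simp add: o_def cbox_interval)
  have "norm (snd (blinfun_apply (f' (t *\<^sub>R z)) z)) \<le> c" if "t \<in> cbox 0 1" for t
  proof -
    let ?L = "blinfun_apply (f' (t *\<^sub>R z))"
    have "norm (snd (?L z)) \<le> norm (dyx ?L x) + norm (dyy ?L y)"
      by (simp add: z_def blinfun_apply_pair_eq_partials norm_triangle_ineq)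
    also have "\<dots> \<le> onorm (dyx ?L) * norm x + onorm (dyy ?L) * norm y"
      by (intro add_mono onorm bounded_linear_dyx bounded_linear_dyy)
    also have "\<dots> \<le> c"
      using bound ray that by (simp add: cbox_interval)
    finally show ?thesis .
  qed
  moreover have "0 \<le> c"
  proof -
    let ?L = "blinfun_apply (f' 0)"
    have "0 \<le> onorm (dyx ?L) * norm x + onorm (dyy ?L) * norm y"
      by (intro add_nonneg_nonneg mult_nonneg_nonneg onorm_pos_le bounded_linear_dyx
          bounded_linear_dyy norm_ge_zero)
    then show ?thesis using bound[OF U(2)] by linarith
  qed
  ultimately show ?thesis
    using has_integral_bound[OF _ int] unfolding z_def by simp
qed

lemma norm_snd_le_in_cone:
  fixes f :: "(real^'u) \<times> (real^'s) \<Rightarrow> (real^'u) \<times> (real^'s)"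
  assumes U: "convex U" "0 \<in> U" "(x, y) \<in> U"
    and deriv: "\<And>w. w \<in> U \<Longrightarrow> (f has_derivative blinfun_apply (f' w)) (at w)"
    and "f 0 = 0" and "M > 0" and cone: "norm y \<le> M * norm x"
    and mu: "\<And>w. w \<in> U \<Longrightarrow>
      onorm (dyy (blinfun_apply (f' w))) + onorm (dyx (blinfun_apply (f' w))) / M \<le> \<mu>"
  shows "norm (snd (f (x, y))) \<le> \<mu> * M * norm x"
proof (rule norm_snd_le[OF U deriv \<open>f 0 = 0\<close>])
  fix w assume "w \<in> U"
  let ?L = "blinfun_apply (f' w)"
  have "onorm (dyx ?L) * norm x + onorm (dyy ?L) * norm y
      \<le> onorm (dyx ?L) * norm x + onorm (dyy ?L) * (M * norm x)"
    using onorm_pos_le[OF bounded_linear_dyy] cone by (intro add_left_mono mult_left_mono)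
  also have "\<dots> = M * norm x * (onorm (dyy ?L) + onorm (dyx ?L) / M)"
    using \<open>M > 0\<close> by (simp add: field_simps)
  also have "\<dots> \<le> M * norm x * \<mu>"
    using mu[OF \<open>w \<in> U\<close>] \<open>M > 0\<close> by (intro mult_left_mono) auto
  finally show "onorm (dyx ?L) * norm x + onorm (dyy ?L) * norm y \<le> \<mu> * M * norm x"
    by (simp add: ac_simps)
qed

lemma norm_fst_ge_in_cone:
  fixes f :: "(real^'u) \<times> (real^'s) \<Rightarrow> (real^'u) \<times> (real^'s)"
  assumes U: "convex U" "0 \<in> U" "(x, y) \<in> U"
    and deriv: "\<And>w. w \<in> U \<Longrightarrow> (f has_derivative blinfun_apply (f' w)) (at w)"
    and cont: "continuous_on U f'" and "f 0 = 0" and cone: "norm y \<le> M * norm x"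
    and S: "\<And>w. w \<in> U \<Longrightarrow> onorm (dxy (blinfun_apply (f' w))) \<le> S"
    and xi: "\<xi> \<le> min_norm_set (interval_enclosure (\<lambda>w. matrix (dxx (blinfun_apply (f' w)))) U) - M * S"
  shows "\<xi> * norm x \<le> norm (fst (f (x, y)))"
proof -
  let ?m = "min_norm_set (interval_enclosure (\<lambda>w. matrix (dxx (blinfun_apply (f' w)))) U)"
  have "0 \<le> S"
    using S[OF U(2)] onorm_pos_le[OF bounded_linear_dxy] by (rule order_trans[rotated])
  have "\<xi> * norm x \<le> (?m - M * S) * norm x"
    using xi by (intro mult_right_mono) auto
  also have "\<dots> \<le> ?m * norm x - S * norm y"
    using mult_left_mono[OF cone \<open>0 \<le> S\<close>] by (simp add: algebra_simps)
  also have "\<dots> \<le> norm (fst (f (x, y)))"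
    by (rule norm_fst_ge_min_norm_set[OF U deriv cont \<open>f 0 = 0\<close> S])
  finally show ?thesis .
qed

lemma strict_cone_subset_interior:
  "{p. norm (snd p) < M * norm (fst p)} \<subseteq> interior (cone_u M)"
  by (rule interior_maximal) (auto simp: cone_u_def intro!: open_Collect_less continuous_intros)

lemma ereal_diff_mult_SUP_ge_obtain_bound:
  fixes g :: "'a \<Rightarrow> real"
  assumes "M > 0" "U \<noteq> {}" and ge: "ereal m - ereal M * (SUP z\<in>U. ereal (g z)) \<ge> ereal \<xi>"
  obtains S where "\<And>z. z \<in> U \<Longrightarrow> g z \<le> S" and "\<xi> \<le> m - M * S"
proof -
  define E where "E = (SUP z\<in>U. ereal (g z))"
  from \<open>U \<noteq> {}\<close> obtain z0 where "ereal (g z0) \<le> E"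
    unfolding E_def by (meson SUP_upper ex_in_conv)
  then have "E \<noteq> -\<infinity>" by auto
  moreover have "E \<noteq> \<infinity>"
    using ge \<open>M > 0\<close> unfolding E_def[symmetric] by auto
  ultimately obtain S where "E = ereal S" by (cases E) auto
  show thesis
  proof (rule that)
    show "g z \<le> S" if "z \<in> U" for z
      using SUP_upper[OF that, of "\<lambda>z. ereal (g z)"] \<open>E = ereal S\<close> unfolding E_def by simp
    show "\<xi> \<le> m - M * S"
      using ge \<open>E = ereal S\<close> unfolding E_def[symmetric] by simp
  qed
qed

theorem theorem4p1:
  fixes U :: "((real^'u) \<times> (real^'s)) set"
    and f :: "(real^'u) \<times> (real^'s) \<Rightarrow> (real^'u) \<times> (real^'s)"
    and f' :: "(real^'u) \<times> (real^'s) \<Rightarrow> (((real^'u) \<times> (real^'s)) \<Rightarrow>\<^sub>L ((real^'u) \<times> (real^'s)))"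
    and M \<xi> \<mu> :: real
  assumes "convex U" and "open U" and "0 \<in> U"
    and "\<And>z. z \<in> U \<Longrightarrow> (f has_derivative blinfun_apply (f' z)) (at z)"
    and "continuous_on U f'"
    and "f 0 = 0"
    and "M > 0"
    and "ereal (min_norm_set (interval_enclosure (\<lambda>z. matrix (dxx (blinfun_apply (f' z)))) U))
           - ereal M * (SUP z\<in>U. ereal (onorm (dxy (blinfun_apply (f' z))))) \<ge> ereal \<xi>"
    and "(SUP z\<in>U. ereal (onorm (dyy (blinfun_apply (f' z)))
                         + onorm (dyx (blinfun_apply (f' z))) / M)) \<le> ereal \<mu>"
    and "\<xi> / \<mu> > 1"
  shows "f ` (cone_u M \<inter> U) \<subseteq> interior (cone_u M) \<union> {0}"
proof
  fix w assume "w \<in> f ` (cone_u M \<inter> U)"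
  then obtain x y where cone: "norm y \<le> M * norm x" and xy: "(x, y) \<in> U" and w: "w = f (x, y)"
    by (auto simp: cone_u_def)
  obtain S where S: "\<And>z. z \<in> U \<Longrightarrow> onorm (dxy (blinfun_apply (f' z))) \<le> S"
    and xi: "\<xi> \<le> min_norm_set (interval_enclosure (\<lambda>z. matrix (dxx (blinfun_apply (f' z)))) U) - M * S"
    using ereal_diff_mult_SUP_ge_obtain_bound[OF \<open>M > 0\<close> _ assms(8)] \<open>0 \<in> U\<close> by blast
  have mu: "\<And>z. z \<in> U \<Longrightarrow> onorm (dyy (blinfun_apply (f' z))) + onorm (dyx (blinfun_apply (f' z))) / M \<le> \<mu>"
    using assms(9) by (simp add: SUP_le_iff)
  have "0 \<le> onorm (dyy (blinfun_apply (f' 0))) + onorm (dyx (blinfun_apply (f' 0))) / M"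
    using \<open>M > 0\<close> by (intro add_nonneg_nonneg divide_nonneg_pos onorm_pos_le
        bounded_linear_dyx bounded_linear_dyy)
  then have "0 \<le> \<mu>"
    using mu[OF \<open>0 \<in> U\<close>] by linarith
  with \<open>\<xi> / \<mu> > 1\<close> have "\<mu> < \<xi>"
    by (cases "\<mu> = 0") (auto simp: field_simps)
  show "w \<in> interior (cone_u M) \<union> {0}"
  proof (cases "x = 0")
    case True
    with cone w \<open>f 0 = 0\<close> show ?thesis by (simp add: zero_prod_def)
  next
    case False
    have "norm (snd (f (x, y))) \<le> \<mu> * M * norm x"
      by (rule norm_snd_le_in_cone[OF assms(1,3) xy assms(4,6,7) cone mu])
    also have "\<dots> < \<xi> * M * norm x"
      using \<open>\<mu> < \<xi>\<close> \<open>M > 0\<close> False by simp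
    also have "\<dots> \<le> M * norm (fst (f (x, y)))"
      using norm_fst_ge_in_cone[OF assms(1,3) xy assms(4,5,6) cone S xi] \<open>M > 0\<close> by simp
    finally show ?thesis
      using strict_cone_subset_interior w by auto
  qed
qed

end
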